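(* For every integer $n\geq 7$ there exists a tree $T$ on $n$ vertices that is neutral, i.e., whose assortativity coefficient satisfies $r(T)=0$.
   Context: All graphs are finite, simple and connected. For a graph $G=(V,E)$ with $m=|E|\geq 1$ edges, let $d_u$ denote the degree of vertex $u$ and write sums over edges $e_{uv}\in E$ (each edge counted once). The assortativity coefficient of $G$ is $$r(G)=\frac{m^{-1}\sum_{e_{uv}\in E} d_{u}d_{v}-\Big[m^{-1}\sum_{e_{uv}\in E} \tfrac{1}{2}(d_{u}+d_{v})\Big]^{2}}{m^{-1}\sum_{e_{uv}\in E} \tfrac{1}{2}(d^{2}_{u}+d^{2}_{v})-\Big[m^{-1}\sum_{e_{uv}\in E} \tfrac{1}{2}(d_{u}+d_{v})\Big]^{2}},$$ defined whenever the denominator is nonzero. $G$ is called neutral if $r(G)$ is defined and $r(G)=0$. *)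

theory Defs
  imports Main "HOL-Library.Multiset" Complex_Main
begin

definition simple_graph :: "'a set \<Rightarrow> 'a set set \<Rightarrow> bool" where
  "simple_graph V E \<longleftrightarrow> finite V \<and> (\<forall>e\<in>E. e \<subseteq> V \<and> card e = 2)"

definition adj :: "'a set set \<Rightarrow> 'a \<Rightarrow> 'a \<Rightarrow> bool" where
  "adj E u v \<longleftrightarrow> {u, v} \<in> E"

definition connected_graph :: "'a set \<Rightarrow> 'a set set \<Rightarrow> bool" where
  "connected_graph V E \<longleftrightarrow> V \<noteq> {} \<and>
     (\<forall>u\<in>V. \<forall>v\<in>V. (adj E)\<^sup>*\<^sup>* u v)"

definition is_tree :: "'a set \<Rightarrow> 'a set set \<Rightarrow> bool" where
  "is_tree V E \<longleftrightarrow> simple_graph V E \<and> connected_graph V E \<and>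
     (\<forall>e\<in>E. \<not> connected_graph V (E - {e}))"

definition degree :: "'a set set \<Rightarrow> 'a \<Rightarrow> nat" where
  "degree E u = card {e\<in>E. u \<in> e}"

text \<open>Assortativity coefficient (sums over edges, each edge once; for an edge
  e = {u,v}: d_u d_v = prod of degrees over e, (d_u+d_v)/2 = half the sum, etc.).\<close>

definition assort_num :: "'a set set \<Rightarrow> real" where
  "assort_num E = (let m = real (card E);
      M1 = (\<Sum>e\<in>E. \<Prod>u\<in>e. real (degree E u)) / m;
      M2 = (\<Sum>e\<in>E. (\<Sum>u\<in>e. real (degree E u)) / 2) / m
    in M1 - M2 ^ 2)"

definition assort_den :: "'a set set \<Rightarrow> real" where
  "assort_den E = (let m = real (card E);
      M3 = (\<Sum>e\<in>E. (\<Sum>u\<in>e. real (degree E u) ^ 2) / 2) / m;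
      M2 = (\<Sum>e\<in>E. (\<Sum>u\<in>e. real (degree E u)) / 2) / m
    in M3 - M2 ^ 2)"

definition assortativity :: "'a set set \<Rightarrow> real" where
  "assortativity E = assort_num E / assort_den E"

text \<open>Neutral: r(G) is defined (m \<ge> 1 and denominator nonzero) and equals 0.\<close>
definition neutral :: "'a set set \<Rightarrow> bool" where
  "neutral E \<longleftrightarrow> card E \<ge> 1 \<and> assort_den E \<noteq> 0 \<and> assortativity E = 0"

end

theory Submission
  imports Defs
begin

(* The witness is the spider with legs of lengths 2, 2 and n - 5 hanging from a centre of
   degree 3. Its edges have degree pairs {3,2} three times, {2,1} three times and {2,2}
   n - 7 times, so with m = n - 1 edges the sums of d_u d_v, (d_u + d_v)/2 and
   (d_u^2 + d_v^2)/2 are 4m, 2m and 4m + 3. Hence the numerator of r is 4 - 2^2 = 0 while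
   the denominator is 3/m. *)

lemma neutral_iff_edge_sums:
  fixes E :: "'a set set"
  defines "m \<equiv> real (card E)"
    and "S1 \<equiv> \<Sum>e\<in>E. \<Prod>u\<in>e. real (degree E u)"
    and "S2 \<equiv> \<Sum>e\<in>E. (\<Sum>u\<in>e. real (degree E u)) / 2"
    and "S3 \<equiv> \<Sum>e\<in>E. (\<Sum>u\<in>e. real (degree E u) ^ 2) / 2"
  shows "neutral E \<longleftrightarrow> card E \<ge> 1 \<and> m * S3 \<noteq> S2 ^ 2 \<and> m * S1 = S2 ^ 2"
proof (cases "card E \<ge> 1")
  case True
  then have "m > 0" by (simp add: m_def)
  then have num: "assort_num E = (m * S1 - S2 ^ 2) / m ^ 2"
    and den: "assort_den E = (m * S3 - S2 ^ 2) / m ^ 2"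
    by (simp_all add: assort_num_def assort_den_def Let_def m_def S1_def S2_def S3_def
        field_simps power2_eq_square)
  show ?thesis
    using \<open>m > 0\<close> True by (auto simp: neutral_def assortativity_def num den)
qed (simp add: neutral_def)

lemma symp_adj: "symp (adj E)"
  by (simp add: symp_def adj_def insert_commute)

lemma connected_graphI:
  assumes "r \<in> V" and "\<And>x. x \<in> V \<Longrightarrow> (adj E)\<^sup>*\<^sup>* r x"
  shows "connected_graph V E"
  unfolding connected_graph_def
proof (intro conjI ballI)
  fix x y assume "x \<in> V" "y \<in> V"
  moreover have "(adj E)\<^sup>*\<^sup>* b a" if "(adj E)\<^sup>*\<^sup>* a b" for a b
    using symp_adj symp_rtranclp sympD that by metis
  ultimately have "(adj E)\<^sup>*\<^sup>* x r" "(adj E)\<^sup>*\<^sup>* r y"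
    using assms(2) by blast+
  then show "(adj E)\<^sup>*\<^sup>* x y" by (rule rtranclp_trans)
qed (use assms(1) in auto)

lemma not_connected_if_closed:
  assumes "u \<in> V" "v \<in> V" "u \<in> S" "v \<notin> S"
    and closed: "\<And>x y. adj E x y \<Longrightarrow> x \<in> S \<Longrightarrow> y \<in> S"
  shows "\<not> connected_graph V E"
proof
  assume "connected_graph V E"
  with assms have "(adj E)\<^sup>*\<^sup>* u v" by (auto simp: connected_graph_def)
  then have "v \<in> S" using \<open>u \<in> S\<close> by induction (auto intro: closed)
  with \<open>v \<notin> S\<close> show False ..
qed

lemma not_connected_obtains_closed:
  assumes "\<not> connected_graph V E" "V \<noteq> {}"
  obtains u v S where "u \<in> V" "v \<in> V" "u \<in> S" "v \<notin> S"
    "\<And>x y. adj E x y \<Longrightarrow> x \<in> S \<Longrightarrow> y \<in> S"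
proof -
  from assms obtain u v where "u \<in> V" "v \<in> V" "\<not> (adj E)\<^sup>*\<^sup>* u v"
    by (auto simp: connected_graph_def)
  then show ?thesis
    by (intro that[of u v "{x. (adj E)\<^sup>*\<^sup>* u x}"]) (auto intro: rtranclp.rtrancl_into_rtrancl)
qed

lemma is_tree_singleton: "is_tree {r} {}"
  by (auto simp: is_tree_def simple_graph_def intro: connected_graphI)

lemma is_tree_insert_leaf:
  assumes tree: "is_tree V E" and "u \<in> V" "v \<notin> V"
  shows "is_tree (insert v V) (insert {u, v} E)"
proof -
  have edges_in_V: "e \<subseteq> V" if "e \<in> E" for e
    using tree that by (auto simp: is_tree_def simple_graph_def)
  have v_isolated: "\<not> adj E v y" "\<not> adj E y v" for y
    using edges_in_V \<open>v \<notin> V\<close> by (auto simp: adj_def)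
  have "u \<noteq> v" using assms by auto
  let ?E' = "insert {u, v} E"
  have "simple_graph (insert v V) ?E'"
    using tree \<open>u \<in> V\<close> \<open>u \<noteq> v\<close> by (auto simp: is_tree_def simple_graph_def)
  moreover have "connected_graph (insert v V) ?E'"
  proof (rule connected_graphI)
    have "(adj E)\<^sup>*\<^sup>* u x" if "x \<in> V" for x
      using tree \<open>u \<in> V\<close> that by (auto simp: is_tree_def connected_graph_def)
    moreover have "adj E \<le> adj ?E'" by (auto simp: adj_def)
    ultimately have "(adj ?E')\<^sup>*\<^sup>* u x" if "x \<in> V" for x
      using that rtranclp_mono by blast
    moreover have "adj ?E' u v" by (simp add: adj_def)
    ultimately show "(adj ?E')\<^sup>*\<^sup>* u x" if "x \<in> insert v V" for x
      using that by auto
  qed (use \<open>u \<in> V\<close> in simp)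
  moreover have "\<not> connected_graph (insert v V) (?E' - {e})" if "e \<in> ?E'" for e
  proof (cases "e = {u, v}")
    case True
    have "{u, v} \<notin> E" using edges_in_V \<open>v \<notin> V\<close> by auto
    then have "?E' - {e} = E" using True by auto
    then show ?thesis
      using \<open>u \<in> V\<close> \<open>u \<noteq> v\<close> v_isolated
      by (intro not_connected_if_closed[of v _ u "{v}"]) auto
  next
    case False
    with that have "e \<in> E" by simp
    with tree have "\<not> connected_graph V (E - {e})" by (simp add: is_tree_def)
    then obtain a b S where ab: "a \<in> V" "b \<in> V" "a \<in> S" "b \<notin> S"
      and closed: "\<And>x y. adj (E - {e}) x y \<Longrightarrow> x \<in> S \<Longrightarrow> y \<in> S"
      using \<open>u \<in> V\<close> by (auto elim: not_connected_obtains_closed)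
    \<comment> \<open>the new leaf joins the side of its neighbour u\<close>
    define S' where "S' = {x. if x = v then u \<in> S else x \<in> S}"
    show ?thesis
    proof (rule not_connected_if_closed[of a _ b S'])
      fix x y assume "adj (?E' - {e}) x y" and "x \<in> S'"
      then consider "{x, y} = {u, v}" | "adj (E - {e}) x y"
        by (auto simp: adj_def)
      then show "y \<in> S'"
      proof cases
        case 1
        then have "x = u \<and> y = v \<or> x = v \<and> y = u" by (simp add: doubleton_eq_iff)
        with \<open>x \<in> S'\<close> \<open>u \<noteq> v\<close> show ?thesis by (auto simp: S'_def)
      next
        case 2
        then have "adj E x y" by (simp add: adj_def)
        with v_isolated have "x \<noteq> v" "y \<noteq> v" by auto
        with 2 \<open>x \<in> S'\<close> closed show ?thesis by (auto simp: S'_def)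
      qed
    qed (use ab \<open>v \<notin> V\<close> in \<open>auto simp: S'_def\<close>)
  qed
  ultimately show ?thesis by (simp add: is_tree_def)
qed

definition parent_edges :: "(nat \<Rightarrow> nat) \<Rightarrow> nat \<Rightarrow> nat set set" where
  "parent_edges p n = (\<lambda>i. {p i, i}) ` {1..<n}"

lemma is_tree_parent_edges:
  assumes "n \<ge> 1" and "\<And>i. 1 \<le> i \<Longrightarrow> i < n \<Longrightarrow> p i < i"
  shows "is_tree {0..<n} (parent_edges p n)"
  using assms
proof (induction n rule: nat_induct_at_least)
  case base
  show ?case by (simp add: parent_edges_def is_tree_singleton)
next
  case (Suc n)
  have "{0..<Suc n} = insert n {0..<n}" "{1..<Suc n} = insert n {1..<n}"
    using \<open>n \<ge> 1\<close> by auto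
  then have "parent_edges p (Suc n) = insert {p n, n} (parent_edges p n)"
    by (simp add: parent_edges_def)
  moreover have "p n \<in> {0..<n}" using Suc.prems \<open>n \<ge> 1\<close> by simp
  ultimately show ?case
    using Suc by (simp add: \<open>{0..<Suc n} = insert n {0..<n}\<close> is_tree_insert_leaf)
qed

lemma inj_on_parent_edge:
  assumes "\<And>i. i \<in> I \<Longrightarrow> p i < (i::nat)"
  shows "inj_on (\<lambda>i. {p i, i}) I"
proof (rule inj_onI)
  fix i j assume "i \<in> I" "j \<in> I" "{p i, i} = {p j, j}"
  then show "i = j" using assms[of i] assms[of j] by (auto simp: doubleton_eq_iff)
qed

lemma sum_parent_edges:
  assumes "\<And>i. 1 \<le> i \<Longrightarrow> i < n \<Longrightarrow> p i < i"
  shows "(\<Sum>e\<in>parent_edges p n. f e) = (\<Sum>i=1..<n. f {p i, i})"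
  unfolding parent_edges_def using assms by (subst sum.reindex) (auto intro: inj_on_parent_edge)

lemma card_parent_edges:
  assumes "\<And>i. 1 \<le> i \<Longrightarrow> i < n \<Longrightarrow> p i < i"
  shows "card (parent_edges p n) = n - 1"
  using sum_parent_edges[OF assms, where f = "\<lambda>_. 1::nat"] by simp

lemma degree_parent_edges:
  assumes "\<And>i. 1 \<le> i \<Longrightarrow> i < n \<Longrightarrow> p i < i"
  shows "degree (parent_edges p n) v = card {i\<in>{1..<n}. p i = v \<or> i = v}"
proof -
  have "{e\<in>parent_edges p n. v \<in> e} = (\<lambda>i. {p i, i}) ` {i\<in>{1..<n}. p i = v \<or> i = v}"
    by (auto simp: parent_edges_def)
  moreover have "inj_on (\<lambda>i. {p i, i}) {i\<in>{1..<n}. p i = v \<or> i = v}"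
    using assms by (intro inj_on_parent_edge) auto
  ultimately show ?thesis by (simp add: degree_def card_image)
qed

(* Vertex 0 is the centre; the legs are 0-1-2, 0-3-4 and 0-5-6-...-(n-1). *)
definition spider_parent :: "nat \<Rightarrow> nat" where
  "spider_parent i = (if i \<in> {1, 3, 5} then 0 else i - 1)"

definition spider_degree :: "nat \<Rightarrow> nat \<Rightarrow> nat" where
  "spider_degree n v = (if v = 0 then 3 else if v \<in> {2, 4, n - 1} then 1 else 2)"

lemma spider_parent_less: "1 \<le> i \<Longrightarrow> spider_parent i < i"
  by (simp add: spider_parent_def)

lemma spider_incident_indices:
  assumes "n \<ge> 7" "v < n"
  shows "{i\<in>{1..<n}. spider_parent i = v \<or> i = v} =
      (if v = 0 then {1, 3, 5} else if v \<in> {2, 4, n - 1} then {v} else {v, v + 1})"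
proof (cases "v = 0")
  case True
  with assms show ?thesis by (auto simp: spider_parent_def)
next
  case False
  have parent: "spider_parent i = v \<longleftrightarrow> i = v + 1 \<and> v \<noteq> 2 \<and> v \<noteq> 4" for i
    using False by (auto simp: spider_parent_def)
  show ?thesis
  proof (cases "v \<in> {2, 4, n - 1}")
    case True
    then have "{i\<in>{1..<n}. spider_parent i = v \<or> i = v} = {v}"
      using False assms by (auto simp: parent)
    with True False show ?thesis by simp
  next
    case outer: False
    then have "{i\<in>{1..<n}. spider_parent i = v \<or> i = v} = {v, v + 1}"
      using False assms by (auto simp: parent)
    with outer False show ?thesis by simp
  qed
qed

lemma degree_spider:
  assumes "n \<ge> 7" "v < n"
  shows "degree (parent_edges spider_parent n) v = spider_degree n v"
  using spider_incident_indices[OF assms]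
  by (simp add: degree_parent_edges spider_parent_less spider_degree_def)

lemma sum_spider_edges:
  fixes g :: "nat \<Rightarrow> nat \<Rightarrow> real"
  assumes "n \<ge> 7"
    and F: "\<And>a b. a < n \<Longrightarrow> b < n \<Longrightarrow> a \<noteq> b \<Longrightarrow>
      F {a, b} = g (spider_degree n a) (spider_degree n b)"
  shows "(\<Sum>e\<in>parent_edges spider_parent n. F e) =
    3 * g 3 2 + 3 * g 2 1 + real (n - 7) * g 2 2"
proof -
  let ?h = "\<lambda>i. g (spider_degree n (spider_parent i)) (spider_degree n i)"
  have "(\<Sum>e\<in>parent_edges spider_parent n. F e) = (\<Sum>i=1..<n. F {spider_parent i, i})"
    by (simp add: sum_parent_edges spider_parent_less)
  also have "\<dots> = sum ?h {1..<n}"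
    using F spider_parent_less by (intro sum.cong) (auto simp: less_imp_neq dual_order.strict_trans)
  also have "\<dots> = sum ?h {1..<n - 1} + ?h (n - 1)"
    using \<open>n \<ge> 7\<close> sum.atLeastLessThan_Suc[of 1 "n - 1" ?h] by simp
  also have "sum ?h {1..<n - 1} = sum ?h {1..<6} + sum ?h {6..<n - 1}"
    using \<open>n \<ge> 7\<close> by (simp add: sum.atLeastLessThan_concat)
  also have "sum ?h {1..<6} = 3 * g 3 2 + 2 * g 2 1"
  proof -
    have "{1..<6} = {1, 2, 3, 4, 5 :: nat}" by auto
    then show ?thesis
      using \<open>n \<ge> 7\<close> by (auto simp: spider_parent_def spider_degree_def)
  qed
  also have "sum ?h {6..<n - 1} = sum (\<lambda>_. g 2 2) {6..<n - 1}"
    using \<open>n \<ge> 7\<close> by (intro sum.cong) (auto simp: spider_parent_def spider_degree_def)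
  also have "\<dots> = real (n - 7) * g 2 2"
    by simp
  also have "?h (n - 1) = g 2 1"
    using \<open>n \<ge> 7\<close> by (auto simp: spider_parent_def spider_degree_def)
  finally show ?thesis by simp
qed

lemma neutral_spider:
  assumes "n \<ge> 7"
  shows "neutral (parent_edges spider_parent n)"
proof -
  let ?E = "parent_edges spider_parent n"
  let ?deg = "\<lambda>u. real (degree ?E u)"
  have deg: "?deg a = real (spider_degree n a)" if "a < n" for a
    using assms that by (simp add: degree_spider)
  have "(\<Sum>e\<in>?E. \<Prod>u\<in>e. ?deg u) =
      3 * (real 3 * real 2) + 3 * (real 2 * real 1) + real (n - 7) * (real 2 * real 2)"
    using assms by (rule sum_spider_edges[where g = "\<lambda>a b. real a * real b"]) (simp add: deg)
  then have S1: "(\<Sum>e\<in>?E. \<Prod>u\<in>e. ?deg u) = 4 * (real n - 1)"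
    using assms by (simp add: of_nat_diff)
  have "(\<Sum>e\<in>?E. (\<Sum>u\<in>e. ?deg u) / 2) =
      3 * ((real 3 + real 2) / 2) + 3 * ((real 2 + real 1) / 2)
        + real (n - 7) * ((real 2 + real 2) / 2)"
    using assms by (rule sum_spider_edges[where g = "\<lambda>a b. (real a + real b) / 2"]) (simp add: deg)
  then have S2: "(\<Sum>e\<in>?E. (\<Sum>u\<in>e. ?deg u) / 2) = 2 * (real n - 1)"
    using assms by (simp add: of_nat_diff)
  have "(\<Sum>e\<in>?E. (\<Sum>u\<in>e. ?deg u ^ 2) / 2) =
      3 * ((real 3 ^ 2 + real 2 ^ 2) / 2) + 3 * ((real 2 ^ 2 + real 1 ^ 2) / 2)
        + real (n - 7) * ((real 2 ^ 2 + real 2 ^ 2) / 2)"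
    using assms
    by (rule sum_spider_edges[where g = "\<lambda>a b. (real a ^ 2 + real b ^ 2) / 2"]) (simp add: deg)
  then have S3: "(\<Sum>e\<in>?E. (\<Sum>u\<in>e. ?deg u ^ 2) / 2) = 4 * (real n - 1) + 3"
    using assms by (simp add: of_nat_diff)
  have "card ?E = n - 1"
    by (simp add: card_parent_edges spider_parent_less)
  with assms have "card ?E \<ge> 1" and m: "real (card ?E) = real n - 1"
    by simp_all
  moreover have "(real n - 1) * (4 * (real n - 1) + 3) \<noteq> (2 * (real n - 1)) ^ 2"
    using assms by (simp add: algebra_simps power2_eq_square)
  moreover have "(real n - 1) * (4 * (real n - 1)) = (2 * (real n - 1)) ^ 2"
    by (simp add: algebra_simps power2_eq_square)
  ultimately show ?thesis
    unfolding neutral_iff_edge_sums S1 S2 S3 m by blast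
qed

theorem theorem2:
  fixes n :: nat
  assumes "n \<ge> 7"
  shows "\<exists>E :: nat set set. is_tree {0..<n} E \<and> neutral E"
proof -
  have "is_tree {0..<n} (parent_edges spider_parent n)"
    using assms by (intro is_tree_parent_edges) (simp_all add: spider_parent_less)
  moreover have "neutral (parent_edges spider_parent n)"
    using assms by (rule neutral_spider)
  ultimately show ?thesis by blast
qed

end
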